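(* Let $q\ge2$ be a prime power, $d\ge6$, $2\le j\le d$ and $1\le i\le d-3$, and let $h_{\max}=\min\{j,d-i\}$. Then $$|Q_j(i)-T_{h_{\max}}(i,j)|\le\begin{cases}|T_0(i,j)|+|T_1(i,j)|+\dots+|T_{j-1}(i,j)|, & \text{if } j\le d-i-1,\\ |T_{d-i-2}(i,j)|+|T_{d-i-1}(i,j)|, & \text{if } j\ge d-i.\end{cases}$$
   Context: Let $b=-q$. For integers $m\ge0$ and $l$, ${m\brack l}_b=\prod_{t=1}^{l}\frac{b^{m-t+1}-1}{b^t-1}$ for $l\ge0$ and $0$ for $l<0$. For $0\le i,j\le d$, $$Q_j(i)=\sum_{h=0}^{\min\{j,d-i\}}(-1)^j(-q)^{\binom{j-h}{2}+hd}{d-h\brack d-j}_b{d-i\brack h}_b,$$ the eigenvalues of the Hermitian forms graph $Q_q(d,j)$. $T_h(i,j)$ denotes the $h$-th summand (including the factor $(-1)^j$). *)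

theory Defs
  imports "HOL-Analysis.Analysis" "HOL-Computational_Algebra.Primes"
begin

definition prime_power :: "nat \<Rightarrow> bool" where
  "prime_power q \<longleftrightarrow> (\<exists>p k. prime p \<and> k \<ge> 1 \<and> q = p ^ k)"

definition gbin :: "real \<Rightarrow> nat \<Rightarrow> int \<Rightarrow> real" where
  "gbin b m l = (if l < 0 then 0
     else (\<Prod>t = 1..nat l. (b ^ (m + 1 - t) - 1) / (b ^ t - 1)))"

(* h-th summand T_h(i,j) of Q_j(i), including the factor (-1)^j; b = -q *)
definition Tsum :: "nat \<Rightarrow> nat \<Rightarrow> nat \<Rightarrow> nat \<Rightarrow> nat \<Rightarrow> real" where
  "Tsum q d i j h = (-1) ^ j * (- real q) ^ (((j - h) choose 2) + h * d)
      * gbin (- real q) (d - h) (int d - int j) * gbin (- real q) (d - i) (int h)"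

definition Qeig :: "nat \<Rightarrow> nat \<Rightarrow> nat \<Rightarrow> nat \<Rightarrow> real" where
  "Qeig q d i j = (\<Sum>h = 0..min j (d - i). Tsum q d i j h)"

end

theory Submission
  imports Defs
begin

(* With b = -q and n = d - i, the Gaussian-binomial recurrences give, for h < j,
   T_(h+1) / T_h = b^(d-j+h+1) (b^(j-h) - 1) (b^(n-h) - 1) / ((b^(d-h) - 1) (b^(h+1) - 1)),
   a ratio of modulus about q^(n-h) and of sign (-1)^(n-h).  For j >= n the terms
   T_0, ..., T_(n-2) therefore at least double in modulus at each step, so the partial
   sum up to T_(n-3) is at most 2 |T_(n-3)| in modulus and has the sign of T_(n-3);
   since T_(n-2) has the opposite sign and modulus at least 2 |T_(n-3)|, adding it
   yields modulus at most |T_(n-2)|.  For j < n the bound is the triangle inequality. *)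

lemma prod_pow_minus_one_shift:
  fixes b :: "'a::comm_ring_1"
  shows "s \<le> m \<Longrightarrow> (\<Prod>t=1..s. b^(m+1-t) - 1) * (b^(m+1) - 1)
        = (\<Prod>t=1..s. b^(m+2-t) - 1) * (b^(m+1-s) - 1)"
proof (induction s)
  case 0
  then show ?case by simp
next
  case (Suc s)
  have shift: "m + 1 - Suc s = m - s" "m + 2 - Suc s = m + 1 - s"
    using Suc.prems by auto
  have "(\<Prod>t=1..Suc s. b^(m+1-t) - 1) * (b^(m+1) - 1)
      = (\<Prod>t=1..s. b^(m+1-t) - 1) * (b^(m+1) - 1) * (b^(m-s) - 1)"
    by (simp add: prod.cl_ivl_Suc shift ac_simps)
  also have "\<dots> = (\<Prod>t=1..s. b^(m+2-t) - 1) * (b^(m+1-s) - 1) * (b^(m-s) - 1)"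
    using Suc by simp
  also have "\<dots> = (\<Prod>t=1..Suc s. b^(m+2-t) - 1) * (b^(m+1 - Suc s) - 1)"
    by (simp add: prod.cl_ivl_Suc shift)
  finally show ?case .
qed

lemma gbin_Suc_upper:
  assumes "s \<le> m"
  shows "gbin b m (int s) * (b^(m+1) - 1) = gbin b (m+1) (int s) * (b^(m+1-s) - 1)"
proof -
  have "gbin b m (int s) = (\<Prod>t=1..s. b^(m+1-t) - 1) / (\<Prod>t=1..s. b^t - 1)"
    "gbin b (m+1) (int s) = (\<Prod>t=1..s. b^(m+2-t) - 1) / (\<Prod>t=1..s. b^t - 1)"
    by (simp_all add: gbin_def prod_dividef)
  then show ?thesis
    using prod_pow_minus_one_shift[OF assms, of b] by (simp add: field_simps)
qed

lemma gbin_Suc_lower: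
  assumes "b^(h+1) \<noteq> 1"
  shows "gbin b n (int (Suc h)) * (b^(h+1) - 1) = gbin b n (int h) * (b^(n-h) - 1)"
proof -
  have "gbin b n (int (Suc h)) = (\<Prod>t=1..Suc h. (b^(n+1-t) - 1) / (b^t - 1))"
    unfolding gbin_def nat_int by simp
  also have "\<dots> = (\<Prod>t=1..h. (b^(n+1-t) - 1) / (b^t - 1)) * ((b^(n-h) - 1) / (b^(Suc h) - 1))"
    by (simp add: prod.cl_ivl_Suc)
  finally show ?thesis
    using assms unfolding gbin_def by simp
qed

lemma neg_power_ne_one:
  fixes x :: real
  assumes "x > 1" "k > 0"
  shows "(- x)^k \<noteq> 1"
proof
  assume "(- x)^k = 1"
  moreover have "\<bar>(- x)^k\<bar> = x^k"
    using assms(1) by (simp add: power_abs)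
  ultimately show False
    using one_less_power[OF assms] by simp
qed

lemma neg_power_minus_one_sign:
  fixes x :: real
  assumes "x > 1" "k > 0"
  shows "(-1)^k * ((- x)^k - 1) > 0"
proof -
  have "(-1)^k * ((- x)^k - 1) = x^k - (-1)^k"
    by (simp add: algebra_simps flip: power_mult_distrib)
  moreover have "(-1::real)^k \<le> 1"
    by (cases "even k") auto
  ultimately show ?thesis
    using one_less_power[OF assms] by linarith
qed

lemma choose_two_Suc: "Suc k choose 2 = (k choose 2) + k"
  by (simp add: numeral_2_eq_2)

lemma Tsum_Suc_mult:
  fixes q d i j h :: nat
  defines "b \<equiv> - real q"
  assumes "q \<ge> 2" "j \<le> d" "h < j"
  shows "Tsum q d i j (Suc h) * ((b^(d-h) - 1) * (b^(h+1) - 1))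
       = Tsum q d i j h * (b^(d-j+h+1) * (b^(j-h) - 1) * (b^(d-i-h) - 1))"
proof -
  have upper: "gbin b (d - Suc h) (int d - int j) * (b^(d-h) - 1)
             = gbin b (d - h) (int d - int j) * (b^(j-h) - 1)"
    using gbin_Suc_upper[of "d - j" "d - Suc h" b] assms by (simp add: of_nat_diff Suc_diff_Suc)
  have "b^(h+1) \<noteq> 1"
    unfolding b_def using assms by (intro neg_power_ne_one) auto
  then have lower: "gbin b (d - i) (int (Suc h)) * (b^(h+1) - 1)
                  = gbin b (d - i) (int h) * (b^(d-i-h) - 1)"
    by (rule gbin_Suc_lower)
  have "((j - h) choose 2) + h * d + (d - j + h + 1) = ((j - Suc h) choose 2) + Suc h * d"
    using choose_two_Suc[of "j - Suc h"] assms by (simp add: Suc_diff_Suc)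
  then have power: "b ^ (((j - Suc h) choose 2) + Suc h * d)
                  = b ^ (((j - h) choose 2) + h * d) * b^(d-j+h+1)"
    by (metis power_add)
  show ?thesis
    unfolding Tsum_def b_def[symmetric] power
    using arg_cong2[OF upper lower, of "(*)"] by (simp add: ac_simps)
qed

lemma abs_Tsum_Suc_ge:
  fixes q d i j h :: nat
  assumes q: "q \<ge> 2" and "j \<le> d" "h + 3 \<le> j" "h + 3 \<le> d - i"
  shows "2 * \<bar>Tsum q d i j h\<bar> \<le> \<bar>Tsum q d i j (Suc h)\<bar>"
proof -
  define b where "b = - real q"
  define D where "D = (b^(d-h) - 1) * (b^(h+1) - 1)"
  define N where "N = b^(d-j+h+1) * (b^(j-h) - 1) * (b^(d-i-h) - 1)"
  have rec: "Tsum q d i j (Suc h) * D = Tsum q d i j h * N"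
    unfolding D_def N_def b_def using Tsum_Suc_mult[OF q, of j d h i] assms by simp
  define a where "a = real q ^ (d-j+h+1)"
  define B where "B = real q ^ (j-h)"
  define C where "C = real q ^ (d-i-h)"
  define X where "X = real q ^ (h+1)"
  define Y where "Y = real q ^ (d-h)"
  have aB: "a * B = Y * X"
    unfolding a_def B_def X_def Y_def power_add[symmetric]
    using assms by (intro arg_cong[where f = "power (real q)"]) auto
  have pow_ge: "real q ^ k \<ge> 2 ^ l" if "l \<le> k" for k l
  proof -
    have "(2::real) ^ l \<le> 2 ^ k"
      using that by (intro power_increasing) auto
    also have "\<dots> \<le> real q ^ k"
      using q by (intro power_mono) auto
    finally show ?thesis .
  qed
  have B8: "B \<ge> 8" and C8: "C \<ge> 8" and Y8: "Y \<ge> 8"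
    unfolding B_def C_def Y_def using assms pow_ge[of 3] by auto
  have X2: "X \<ge> 2"
    unfolding X_def using pow_ge[of 1 "h+1"] by simp
  have a0: "a \<ge> 0"
    unfolding a_def by simp
  have abs_pow_minus_one: "real q ^ k - 1 \<le> \<bar>b^k - 1\<bar>" "\<bar>b^k - 1\<bar> \<le> real q ^ k + 1" for k
    using abs_triangle_ineq4[of "b^k" 1] abs_triangle_ineq2[of "b^k" 1]
    unfolding b_def by (simp_all add: power_abs)
  have "\<bar>N\<bar> = a * \<bar>b^(j-h) - 1\<bar> * \<bar>b^(d-i-h) - 1\<bar>"
    unfolding N_def a_def b_def by (simp add: abs_mult power_abs)
  then have N_ge: "a * (B - 1) * (C - 1) \<le> \<bar>N\<bar>"
    using abs_pow_minus_one[of "j-h"] abs_pow_minus_one[of "d-i-h"] a0 B8 C8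
    unfolding B_def C_def by (auto intro!: mult_mono mult_left_mono)
  have D_le: "\<bar>D\<bar> \<le> (Y + 1) * (X + 1)"
    unfolding D_def abs_mult Y_def X_def
    using abs_pow_minus_one[of "d-h"] abs_pow_minus_one[of "h+1"] by (intro mult_mono) auto
  have "a * 8 \<le> Y * X"
    using aB B8 a0 by (metis mult_left_mono)
  moreover have "a * (B - 1) * 7 \<le> a * (B - 1) * (C - 1)"
    using a0 B8 C8 by (intro mult_left_mono) auto
  moreover have "a * (B - 1) * 7 = 7 * (Y * X) - 7 * a"
    using aB by (simp add: algebra_simps)
  moreover have "Y * 2 \<le> Y * X" "X * 8 \<le> X * Y" "2 * 8 \<le> X * Y"
    using X2 Y8 mult_left_mono[of 2 X Y] mult_left_mono[of 8 Y X] mult_mono[of 2 X 8 Y] by auto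
  then have "2 * ((Y + 1) * (X + 1)) \<le> 27 / 8 * (Y * X)"
    by (simp add: algebra_simps)
  ultimately have ND: "2 * \<bar>D\<bar> \<le> \<bar>N\<bar>"
    using N_ge D_le by linarith
  have "b^(d-h) \<noteq> 1" "b^(h+1) \<noteq> 1"
    unfolding b_def by (rule neg_power_ne_one; use assms in simp)+
  then have "\<bar>D\<bar> > 0"
    unfolding D_def by simp
  moreover have "\<bar>Tsum q d i j (Suc h)\<bar> * \<bar>D\<bar> = \<bar>Tsum q d i j h\<bar> * \<bar>N\<bar>"
    using rec by (metis abs_mult)
  then have "(2 * \<bar>Tsum q d i j h\<bar>) * \<bar>D\<bar> \<le> \<bar>Tsum q d i j (Suc h)\<bar> * \<bar>D\<bar>"
    using mult_left_mono[OF ND abs_ge_zero[of "Tsum q d i j h"]] by (simp add: ac_simps)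
  ultimately show ?thesis
    by simp
qed

lemma Tsum_Suc_mult_nonpos:
  fixes q d i j h :: nat
  assumes q: "q \<ge> 2" and "j \<le> d" "h < j" "odd (d - i - h)"
  shows "Tsum q d i j (Suc h) * Tsum q d i j h \<le> 0"
proof -
  define b where "b = - real q"
  define D where "D = (b^(d-h) - 1) * (b^(h+1) - 1)"
  define N where "N = b^(d-j+h+1) * (b^(j-h) - 1) * (b^(d-i-h) - 1)"
  have rec: "Tsum q d i j (Suc h) * D = Tsum q d i j h * N"
    unfolding D_def N_def b_def using Tsum_Suc_mult[OF q, of j d h i] assms by simp
  have pos: "(-1)^k * (b^k - 1) > 0" if "k > 0" for k
    unfolding b_def using q that by (intro neg_power_minus_one_sign) auto
  have pow_pos: "(-1)^k * b^k > 0" for k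
    unfolding b_def using q by (simp flip: power_mult_distrib)
  have "d - i - h > 0"
    using assms(4) by (metis odd_pos)
  then have "0 < (-1)^(j-h) * (b^(j-h) - 1)" "0 < (-1)^(d-i-h) * (b^(d-i-h) - 1)"
      "0 < (-1)^(d-h) * (b^(d-h) - 1)" "0 < (-1)^(h+1) * (b^(h+1) - 1)"
    using assms by (intro pos; simp)+
  then have "0 < ((-1)^(d-j+h+1) * b^(d-j+h+1)) * ((-1)^(j-h) * (b^(j-h) - 1))
      * ((-1)^(d-i-h) * (b^(d-i-h) - 1)) * ((-1)^(d-h) * (b^(d-h) - 1)) * ((-1)^(h+1) * (b^(h+1) - 1))"
    using pow_pos by (blast intro: mult_pos_pos)
  also have "\<dots> = (-1)^((d-j+h+1) + (j-h) + (d-i-h) + (d-h) + (h+1)) * (N * D)"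
    unfolding N_def D_def by (simp only: power_add ac_simps)
  also have "(d-j+h+1) + (j-h) + (d-i-h) + (d-h) + (h+1) = 2 * (d+1) + (d-i-h)"
    using assms by auto
  finally have ND: "N * D < 0"
    using assms(4) by (simp add: power_add)
  have "Tsum q d i j (Suc h) * Tsum q d i j h * (D * D) = (Tsum q d i j h)\<^sup>2 * (N * D)"
    using rec by (simp add: power2_eq_square)
  also have "\<dots> \<le> 0"
    using ND by (simp add: mult_nonneg_nonpos)
  finally have "Tsum q d i j (Suc h) * Tsum q d i j h * (D * D) \<le> 0" .
  moreover have "D * D > 0"
    using ND by (metis mult_eq_0_iff not_real_square_gt_zero order_less_irrefl)
  ultimately show ?thesis
    by (metis mult_le_cancel_right_pos mult_zero_left)
qed

lemma sum_abs_le_of_doubling: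
  fixes f :: "nat \<Rightarrow> real"
  assumes "\<And>h. h < m \<Longrightarrow> 2 * \<bar>f h\<bar> \<le> \<bar>f (Suc h)\<bar>"
  shows "(\<Sum>h<m. \<bar>f h\<bar>) \<le> \<bar>f m\<bar>"
  using assms
proof (induction m)
  case 0
  then show ?case by simp
next
  case (Suc m)
  then have "(\<Sum>h<m. \<bar>f h\<bar>) \<le> \<bar>f m\<bar>" "2 * \<bar>f m\<bar> \<le> \<bar>f (Suc m)\<bar>"
    by simp_all
  then show ?case by simp
qed

lemma abs_add_add_le_of_opposite_sign:
  fixes s a c :: real
  assumes "\<bar>s\<bar> \<le> \<bar>a\<bar>" "2 * \<bar>a\<bar> \<le> \<bar>c\<bar>" "c * a \<le> 0"
  shows "\<bar>s + a + c\<bar> \<le> \<bar>c\<bar>"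
proof -
  consider "a \<ge> 0" "c \<le> 0" | "a \<le> 0" "c \<ge> 0"
    using assms(3) by (auto simp: mult_le_0_iff)
  then show ?thesis
    using assms(1,2) by cases (simp_all add: abs_le_iff abs_of_nonneg abs_of_nonpos)
qed

lemma abs_sum_le_of_doubling_alternating:
  fixes f :: "nat \<Rightarrow> real"
  assumes doubling: "\<And>h. h \<le> m \<Longrightarrow> 2 * \<bar>f h\<bar> \<le> \<bar>f (Suc h)\<bar>"
    and alternating: "f (Suc m) * f m \<le> 0"
  shows "\<bar>\<Sum>h<Suc (Suc m). f h\<bar> \<le> \<bar>f (Suc m)\<bar>"
proof -
  have "(\<Sum>h<m. \<bar>f h\<bar>) \<le> \<bar>f m\<bar>"
    by (rule sum_abs_le_of_doubling) (simp add: doubling)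
  then have "\<bar>\<Sum>h<m. f h\<bar> \<le> \<bar>f m\<bar>"
    using sum_abs[of f "{..<m}"] by linarith
  then show ?thesis
    using abs_add_add_le_of_opposite_sign doubling[of m] alternating by simp
qed

theorem lemma5p3:
  fixes q d i j :: nat
  assumes "prime_power q" and "q \<ge> 2" and "d \<ge> 6"
    and "2 \<le> j" and "j \<le> d" and "1 \<le> i" and "i \<le> d - 3"
  shows "\<bar>Qeig q d i j - Tsum q d i j (min j (d - i))\<bar> \<le>
    (if j \<le> d - i - 1 then (\<Sum>h = 0..<j. \<bar>Tsum q d i j h\<bar>)
     else \<bar>Tsum q d i j (d - i - 2)\<bar> + \<bar>Tsum q d i j (d - i - 1)\<bar>)"
proof -
  define n where "n = d - i"
  define T where "T = Tsum q d i j"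
  have Q: "Qeig q d i j - T (min j n) = (\<Sum>h<min j n. T h)"
    unfolding Qeig_def T_def n_def atLeast0AtMost lessThan_Suc_atMost[symmetric] by simp
  show ?thesis
  proof (cases "j \<le> n - 1")
    case True
    then have "min j n = j"
      unfolding n_def using assms by auto
    then show ?thesis
      using True Q sum_abs[of T "{..<j}"] by (simp add: n_def T_def atLeast0LessThan)
  next
    case False
    then have "min j n = n" "n \<le> j"
      unfolding n_def using assms by auto
    define m where "m = n - 3"
    have m: "n = Suc (Suc (Suc m))"
      unfolding m_def n_def using assms by auto
    have doubling: "2 * \<bar>T h\<bar> \<le> \<bar>T (Suc h)\<bar>" if "h \<le> m" for h
      unfolding T_def using abs_Tsum_Suc_ge[OF assms(2,5)] that m \<open>n \<le> j\<close> n_def by simp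
    have alternating: "T (Suc m) * T m \<le> 0"
      unfolding T_def using \<open>n \<le> j\<close> m n_def by (intro Tsum_Suc_mult_nonpos[OF assms(2,5)]) auto
    have "\<bar>\<Sum>h<n. T h\<bar> \<le> \<bar>\<Sum>h<Suc (Suc m). T h\<bar> + \<bar>T (Suc (Suc m))\<bar>"
      unfolding m sum.lessThan_Suc[of _ "Suc (Suc m)"] by (rule abs_triangle_ineq)
    also have "\<dots> \<le> \<bar>T (Suc m)\<bar> + \<bar>T (Suc (Suc m))\<bar>"
      using abs_sum_le_of_doubling_alternating[OF doubling alternating] by simp
    finally show ?thesis
      using False Q \<open>min j n = n\<close> m unfolding n_def T_def
      by (simp add: numeral_2_eq_2 del: sum.lessThan_Suc)
  qed
qed

end
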